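(* Let $q$ be a power of $2$ and $r\in[q-1]$. The minimum Hamming distance $d$ of the QLRS code, viewed as the block code $\{(f(\boldsymbol v))_{\boldsymbol v\in\mathbb F_q^2}: f\in\mathcal C_q(\Phi,q-r)\}\subseteq\mathbb F_q^{q^2}$, satisfies $qr+1\le d\le qr+q$.
   Context: $\Phi=\{\alpha x^2+\beta x+\gamma:\alpha,\beta,\gamma\in\mathbb F_q\}$. For $f\in\mathbb F_q[x,y]$ and $\phi\in\Phi$, $f|_\phi$ is the reduction of $f(x,\phi(x))$ modulo $x^q-x$. $\mathcal C_q(\Phi,q-r)$ is the $\mathbb F_q$-space of $f\in\mathbb F_q[x,y]$ with $\deg_xf,\deg_yf\le q-1$ and $\deg f|_\phi<q-r$ for all $\phi\in\Phi$. The minimum Hamming distance is the minimum number of nonzero coordinates of a nonzero evaluation vector. *)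

theory Defs
  imports "HOL-Computational_Algebra.Polynomial" "HOL-Library.Cardinality"
begin

text \<open>Bivariate polynomials over F_q are represented as elements of F_q[x][y],
  i.e. polynomials in y whose coefficients are polynomials in x.\<close>

definition deg_x :: "'a::zero poly poly \<Rightarrow> nat" where
  "deg_x f = Max (insert 0 {degree (coeff f i) | i. i \<le> degree f})"

abbreviation deg_y :: "'a::zero poly poly \<Rightarrow> nat" where
  "deg_y f \<equiv> degree f"

definition eval2 :: "'a::comm_semiring_0 poly poly \<Rightarrow> 'a \<Rightarrow> 'a \<Rightarrow> 'a" where
  "eval2 f a b = poly (map_poly (\<lambda>p. poly p a) f) b"

definition Phi :: "'a::zero poly set" where
  "Phi = {[:\<gamma>, \<beta>, \<alpha>:] | \<alpha> \<beta> \<gamma>. True}"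

definition restrict :: "nat \<Rightarrow> 'a::field poly poly \<Rightarrow> 'a poly \<Rightarrow> 'a poly" where
  "restrict q f \<phi> = poly f \<phi> mod (monom 1 q - monom 1 1)"

definition QLRS :: "nat \<Rightarrow> nat \<Rightarrow> 'a::field poly poly set" where
  "QLRS q k = {f. deg_x f \<le> q - 1 \<and> deg_y f \<le> q - 1 \<and>
               (\<forall>\<phi>\<in>Phi. degree (restrict q f \<phi>) < k)}"

definition evec :: "'a::comm_semiring_0 poly poly \<Rightarrow> ('a \<times> 'a \<Rightarrow> 'a)" where
  "evec f = (\<lambda>v. eval2 f (fst v) (snd v))"

definition hamming_weight :: "('b \<Rightarrow> 'a::zero) \<Rightarrow> nat" where
  "hamming_weight w = card {v. w v \<noteq> 0}"

definition min_distance :: "('b \<Rightarrow> 'a::zero) set \<Rightarrow> nat" where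
  "min_distance C = Min {hamming_weight w | w. w \<in> C \<and> w \<noteq> (\<lambda>_. 0)}"

end

theory Submission
  imports Defs
begin

text \<open>Lower bound: pick a point (a0, b0) where f does not vanish. For each of the q^2
  parabolas through (a0, b0), the restriction of f is a univariate polynomial of degree
  below q - r that is nonzero at a0, so it is nonzero at r or more further points x.
  Since a point (x, y) with x distinct from a0 lies on exactly q of these parabolas (the
  leading coefficient is free, the linear one is then determined), f is nonzero at q r or
  more points off the line x = a0, and additionally at (a0, b0).
  Upper bound: f(x, y) = g(x) with g a product of q - r - 1 distinct linear factors lies in
  the code and has weight q (r + 1).\<close>

lemma power_card_eq:
  fixes a :: "'a::{field,finite}"
  shows "a ^ CARD('a) = a"
proof (cases "a = 0")
  case True
  then show ?thesis by simp
next
  case False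
  let ?U = "UNIV - {0::'a}"
  have bij: "bij_betw (\<lambda>x. a * x) ?U ?U"
  proof -
    have "x \<in> (\<lambda>x. a * x) ` ?U" if "x \<noteq> 0" for x
      using False that by (intro image_eqI[of _ _ "x / a"]) auto
    then show ?thesis unfolding bij_betw_def inj_on_def using False by auto
  qed
  have "prod (\<lambda>x. x) ?U = prod (\<lambda>x. a * x) ?U"
    using prod.reindex_bij_betw[OF bij, of "\<lambda>x. x"] by simp
  also have "\<dots> = a ^ card ?U * prod (\<lambda>x. x) ?U"
    by (simp add: prod.distrib)
  finally have "a ^ card ?U = 1"
    by (simp add: prod_zero_iff)
  moreover have "card ?U = CARD('a) - 1"
    by (simp add: card_Diff_singleton)
  moreover have "CARD('a) > 0"
    by simp
  ultimately show ?thesis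
    by (metis Suc_diff_1 mult.right_neutral power_Suc)
qed

lemma poly_poly_eq_eval2:
  fixes f :: "'a::comm_ring_1 poly poly"
  shows "poly (poly f \<phi>) a = eval2 f a (poly \<phi> a)"
  unfolding eval2_def by (induction f) (simp_all add: map_poly_pCons)

lemma poly_restrict:
  fixes f :: "'a::{field,finite} poly poly"
  shows "poly (restrict CARD('a) f \<phi>) a = eval2 f a (poly \<phi> a)"
proof -
  let ?m = "monom 1 CARD('a) - monom 1 1 :: 'a poly"
  have "poly ?m a = 0"
    by (simp add: poly_monom power_card_eq)
  have "poly (poly f \<phi>) a = poly (poly f \<phi> div ?m * ?m + poly f \<phi> mod ?m) a"
    by (simp only: div_mult_mod_eq)
  also have "\<dots> = poly (poly f \<phi> mod ?m) a"
    using \<open>poly ?m a = 0\<close> by (simp only: poly_add poly_mult) simp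
  finally have "poly (poly f \<phi>) a = poly (poly f \<phi> mod ?m) a" .
  then show ?thesis
    unfolding restrict_def by (simp add: poly_poly_eq_eval2)
qed

lemma card_nonroots_ge:
  fixes p :: "'a::{idom,finite} poly"
  assumes "p \<noteq> 0"
  shows "CARD('a) \<le> degree p + card {x. poly p x \<noteq> 0}"
proof -
  have "UNIV = {x. poly p x = 0} \<union> {x. poly p x \<noteq> 0}" by blast
  then have "CARD('a) \<le> card {x. poly p x = 0} + card {x. poly p x \<noteq> 0}"
    by (metis card_Un_le)
  then show ?thesis
    using card_poly_roots_bound[OF assms] by linarith
qed

definition parabola :: "'a::comm_ring_1 \<Rightarrow> 'a \<Rightarrow> 'a \<Rightarrow> 'a \<Rightarrow> 'a poly" where
  "parabola a0 b0 \<alpha> \<beta> = [:b0 - \<beta> * a0 - \<alpha> * a0\<^sup>2, \<beta>, \<alpha>:]"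

lemma parabola_in_Phi: "parabola a0 b0 \<alpha> \<beta> \<in> Phi"
  unfolding Phi_def parabola_def by blast

lemma poly_parabola:
  "poly (parabola a0 b0 \<alpha> \<beta>) x = b0 + \<beta> * (x - a0) + \<alpha> * (x\<^sup>2 - a0\<^sup>2)"
  unfolding parabola_def by (simp add: algebra_simps power2_eq_square)

lemma parabola_linear_coeff_unique:
  fixes x a0 :: "'a::idom"
  assumes "x \<noteq> a0"
    and "poly (parabola a0 b0 \<alpha> \<beta>) x = poly (parabola a0 b0 \<alpha> \<beta>') x"
  shows "\<beta> = \<beta>'"
  using assms by (simp add: poly_parabola)

lemma card_nonzeros_on_parabola:
  fixes f :: "'a::{field,finite} poly poly"
  assumes deg: "degree (restrict CARD('a) f (parabola a0 b0 \<alpha> \<beta>)) < CARD('a) - r"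
    and nz: "eval2 f a0 b0 \<noteq> 0"
  shows "r \<le> card {x. x \<noteq> a0 \<and> eval2 f x (poly (parabola a0 b0 \<alpha> \<beta>) x) \<noteq> 0}"
proof -
  define \<rho> where "\<rho> = restrict CARD('a) f (parabola a0 b0 \<alpha> \<beta>)"
  have poly_\<rho>: "poly \<rho> x = eval2 f x (poly (parabola a0 b0 \<alpha> \<beta>) x)" for x
    unfolding \<rho>_def by (rule poly_restrict)
  have "poly \<rho> a0 \<noteq> 0"
    using nz by (simp add: poly_\<rho> poly_parabola)
  then have "CARD('a) \<le> degree \<rho> + card {x. poly \<rho> x \<noteq> 0}"
    by (intro card_nonroots_ge) auto
  moreover have "{x. poly \<rho> x \<noteq> 0} = insert a0 {x. x \<noteq> a0 \<and> poly \<rho> x \<noteq> 0}"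
    using \<open>poly \<rho> a0 \<noteq> 0\<close> by auto
  ultimately show ?thesis
    using deg by (simp add: \<rho>_def[symmetric] poly_\<rho>)
qed

text \<open>Double counting of the incidences between the parabolas through (a0, b0) and the
  points off the line x = a0: the map sending an incidence to its point and the leading
  coefficient of its parabola is injective.\<close>

lemma card_support_off_line_ge:
  fixes w :: "'a::{field,finite} \<times> 'a \<Rightarrow> 'b::zero"
  assumes "\<And>\<alpha> \<beta>. r \<le> card {x. x \<noteq> a0 \<and> w (x, poly (parabola a0 b0 \<alpha> \<beta>) x) \<noteq> 0}"
  shows "CARD('a) * r \<le> card {v. w v \<noteq> 0 \<and> fst v \<noteq> a0}"
proof -
  let ?N = "\<lambda>(\<alpha>, \<beta>). {x. x \<noteq> a0 \<and> w (x, poly (parabola a0 b0 \<alpha> \<beta>) x) \<noteq> 0}"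
  let ?I = "Sigma (UNIV :: ('a \<times> 'a) set) ?N"
  let ?S = "{v. w v \<noteq> 0 \<and> fst v \<noteq> a0}"
  define g where "g = (\<lambda>((\<alpha>, \<beta>), x). ((x, poly (parabola a0 b0 \<alpha> \<beta>) x), \<alpha>))"
  have "CARD('a) * CARD('a) * r = (\<Sum>ab\<in>(UNIV :: ('a \<times> 'a) set). r)"
    by (simp add: card_cartesian_product[of UNIV UNIV, simplified])
  also have "\<dots> \<le> (\<Sum>ab\<in>UNIV. card (?N ab))"
    using assms by (intro sum_mono) auto
  also have "\<dots> = card ?I"
    by (rule card_SigmaI[symmetric]) auto
  also have "\<dots> \<le> card (?S \<times> (UNIV :: 'a set))"
  proof (rule card_inj_on_le)
    show "inj_on g ?I"
      unfolding g_def by (auto intro!: inj_onI dest: parabola_linear_coeff_unique)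
    show "g ` ?I \<subseteq> ?S \<times> UNIV"
      unfolding g_def by auto
  qed auto
  also have "\<dots> = card ?S * CARD('a)"
    by (simp add: card_cartesian_product)
  finally show ?thesis
    by (simp add: mult.commute)
qed

lemma hamming_weight_ge:
  fixes f :: "'a::{field,finite} poly poly"
  assumes deg: "\<forall>\<phi>\<in>Phi. degree (restrict CARD('a) f \<phi>) < CARD('a) - r"
    and nz: "evec f \<noteq> (\<lambda>_. 0)"
  shows "CARD('a) * r + 1 \<le> hamming_weight (evec f)"
proof -
  obtain a0 b0 where p: "eval2 f a0 b0 \<noteq> 0"
    using nz unfolding evec_def by fastforce
  let ?S = "{v. evec f v \<noteq> 0 \<and> fst v \<noteq> a0}"
  have "CARD('a) * r \<le> card ?S"
  proof (rule card_support_off_line_ge)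
    fix \<alpha> \<beta>
    have "r \<le> card {x. x \<noteq> a0 \<and> eval2 f x (poly (parabola a0 b0 \<alpha> \<beta>) x) \<noteq> 0}"
      by (rule card_nonzeros_on_parabola[OF bspec[OF deg parabola_in_Phi] p])
    then show "r \<le> card {x. x \<noteq> a0 \<and> evec f (x, poly (parabola a0 b0 \<alpha> \<beta>) x) \<noteq> 0}"
      by (simp add: evec_def)
  qed
  moreover have "card (insert (a0, b0) ?S) \<le> card {v. evec f v \<noteq> 0}"
    using p by (intro card_mono) (auto simp: evec_def)
  ultimately show ?thesis
    unfolding hamming_weight_def by (simp add: card_insert_if)
qed

lemma mod_monom_diff_eq_self:
  fixes g :: "'a::field poly"
  assumes "degree g < q"
  shows "g mod (monom 1 q - monom 1 1) = g"
proof (cases "q = 1")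
  case False
  with assms have "degree (monom 1 q - monom 1 1 :: 'a poly) = q"
    unfolding diff_conv_add_uminus
    by (subst degree_add_eq_left) (auto simp: degree_monom_eq)
  then show ?thesis
    using assms by (simp add: mod_poly_less)
qed simp

lemma const_y_in_QLRS:
  fixes g :: "'a::field poly"
  assumes "degree g < k" and "k \<le> q"
  shows "[:g:] \<in> QLRS q k"
proof -
  have "{degree (coeff [:g:] i) | i. i \<le> degree [:g:]} = {degree g}"
    by auto
  then have "deg_x [:g:] \<le> q - 1"
    unfolding deg_x_def using assms by simp
  moreover have "restrict q [:g:] \<phi> = g" for \<phi>
    using mod_monom_diff_eq_self[of g q] assms unfolding restrict_def by simp
  ultimately show ?thesis
    unfolding QLRS_def using assms by simp
qed

lemma hamming_weight_evec_const_y: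
  fixes g :: "'a::{comm_semiring_0,finite} poly"
  shows "hamming_weight (evec [:g:]) = card {x. poly g x \<noteq> 0} * CARD('a)"
proof -
  have "{v. evec [:g:] v \<noteq> 0} = {x. poly g x \<noteq> 0} \<times> UNIV"
    by (auto simp: evec_def eval2_def map_poly_pCons)
  then show ?thesis
    unfolding hamming_weight_def by (simp add: card_cartesian_product)
qed

lemma exists_poly_card_nonroots:
  assumes "n \<le> CARD('a::{idom,finite})"
  shows "\<exists>g :: 'a poly. degree g = CARD('a) - n \<and> card {x. poly g x \<noteq> 0} = n"
proof -
  obtain A :: "'a set" where A: "card A = CARD('a) - n"
    using obtain_subset_with_card_n[of "CARD('a) - n" "UNIV :: 'a set"] by auto
  define g where "g = (\<Prod>a\<in>A. [:-a, 1:])"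
  have "degree g = CARD('a) - n"
    unfolding g_def using A by (subst degree_prod_sum_eq) auto
  moreover have "{x. poly g x \<noteq> 0} = UNIV - A"
    unfolding g_def poly_prod by auto
  then have "card {x. poly g x \<noteq> 0} = n"
    using A assms by (simp add: card_Diff_subset)
  ultimately show ?thesis by blast
qed

lemma min_distance_bounds:
  fixes C :: "('b::finite \<Rightarrow> 'a::zero) set"
  assumes "\<And>w. w \<in> C \<Longrightarrow> w \<noteq> (\<lambda>_. 0) \<Longrightarrow> d \<le> hamming_weight w"
    and "w \<in> C" and "w \<noteq> (\<lambda>_. 0)"
  shows "d \<le> min_distance C \<and> min_distance C \<le> hamming_weight w"
proof -
  let ?W = "{hamming_weight w | w. w \<in> C \<and> w \<noteq> (\<lambda>_. 0)}"
  have "?W \<subseteq> {..CARD('b)}"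
    unfolding hamming_weight_def by (auto intro: card_mono)
  then have fin: "finite ?W"
    by (rule finite_subset) simp
  have w: "hamming_weight w \<in> ?W"
    using assms(2,3) by blast
  then have "d \<le> Min ?W"
    using Min_ge_iff[OF fin] assms(1) by blast
  moreover have "Min ?W \<le> hamming_weight w"
    using Min_le[OF fin w] .
  ultimately show ?thesis
    unfolding min_distance_def by simp
qed

theorem mainTheorem6:
  fixes r :: nat
    and C :: "('a::{field,finite} \<times> 'a \<Rightarrow> 'a) set"
  assumes "\<exists>m. CARD('a) = 2 ^ m"
    and "1 \<le> r" and "r \<le> CARD('a) - 1"
    and "C = evec ` (QLRS CARD('a) (CARD('a) - r))"
  shows "CARD('a) * r + 1 \<le> min_distance C \<and> min_distance C \<le> CARD('a) * r + CARD('a)"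
proof -
  let ?q = "CARD('a)"
  have "0 < ?q"
    by simp
  then have "r + 1 \<le> ?q"
    using assms(3) by linarith
  then obtain g :: "'a poly" where g: "degree g = ?q - (r + 1)" "card {x. poly g x \<noteq> 0} = r + 1"
    using exists_poly_card_nonroots by blast
  have "[:g:] \<in> QLRS ?q (?q - r)"
    using g(1) \<open>r + 1 \<le> ?q\<close> by (intro const_y_in_QLRS) auto
  moreover have weight: "hamming_weight (evec [:g:]) = ?q * r + ?q"
    by (simp add: hamming_weight_evec_const_y g(2) algebra_simps)
  moreover have "evec [:g:] \<noteq> (\<lambda>_. 0)"
    using weight by (auto simp: hamming_weight_def)
  moreover have "?q * r + 1 \<le> hamming_weight w" if "w \<in> C" "w \<noteq> (\<lambda>_. 0)" for w
    using that assms(4) hamming_weight_ge unfolding QLRS_def by blast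
  ultimately show ?thesis
    using min_distance_bounds[where C = C and d = "?q * r + 1" and w = "evec [:g:]"] assms(4)
    by fastforce
qed

end
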